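(* Let $\Gamma_1=(V_1,E_1)$ be a graph and let $\Gamma_2=(V_2,E_2)$ be a $\delta$-regular graph. A set $S\subseteq V_1$ is a global offensive $k$-alliance in $\Gamma_1$ if and only if $S\times V_2$ is a global offensive $(k-\delta)$-alliance in $\Gamma_1\times\Gamma_2$.
   Context: Graphs are finite and simple. In a graph $G=(V,E)$, for $S\subseteq V$ and $v\in V$, $\delta_S(v)$ is the number of neighbours of $v$ in $S$, $\overline{S}=V\setminus S$, and $\partial(S)$ the set of vertices of $\overline{S}$ with a neighbour in $S$. A nonempty $S$ is an offensive $k$-alliance in $G$ if $\delta_S(v)\ge\delta_{\overline{S}}(v)+k$ for every $v\in\partial(S)$, and a global offensive $k$-alliance if moreover it is dominating. The Cartesian product $\Gamma_1\times\Gamma_2$ has vertex set $V_1\times V_2$, with $(u,v)\sim(u',v')$ iff either $u=u'$ and $v\sim v'$, or $v=v'$ and $u\sim u'$. *)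

theory Defs
  imports Main
begin

definition simple_graph :: "'a set \<Rightarrow> ('a \<Rightarrow> 'a \<Rightarrow> bool) \<Rightarrow> bool" where
  "simple_graph V E \<longleftrightarrow> finite V \<and> (\<forall>x y. E x y \<longrightarrow> x \<in> V \<and> y \<in> V)
     \<and> (\<forall>x y. E x y \<longrightarrow> E y x) \<and> (\<forall>x. \<not> E x x)"

definition deg_in :: "('a \<Rightarrow> 'a \<Rightarrow> bool) \<Rightarrow> 'a set \<Rightarrow> 'a \<Rightarrow> nat" where
  "deg_in E S v = card {u \<in> S. E v u}"

definition regular :: "'a set \<Rightarrow> ('a \<Rightarrow> 'a \<Rightarrow> bool) \<Rightarrow> nat \<Rightarrow> bool" where
  "regular V E d \<longleftrightarrow> (\<forall>v\<in>V. deg_in E V v = d)"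

definition boundary :: "'a set \<Rightarrow> ('a \<Rightarrow> 'a \<Rightarrow> bool) \<Rightarrow> 'a set \<Rightarrow> 'a set" where
  "boundary V E S = {v \<in> V - S. \<exists>u\<in>S. E v u}"

definition offensive_alliance :: "'a set \<Rightarrow> ('a \<Rightarrow> 'a \<Rightarrow> bool) \<Rightarrow> int \<Rightarrow> 'a set \<Rightarrow> bool" where
  "offensive_alliance V E k S \<longleftrightarrow> S \<noteq> {} \<and> S \<subseteq> V \<and>
     (\<forall>v \<in> boundary V E S. int (deg_in E S v) \<ge> int (deg_in E (V - S) v) + k)"

definition dominating :: "'a set \<Rightarrow> ('a \<Rightarrow> 'a \<Rightarrow> bool) \<Rightarrow> 'a set \<Rightarrow> bool" where
  "dominating V E S \<longleftrightarrow> S \<subseteq> V \<and> (\<forall>v \<in> V - S. \<exists>u\<in>S. E v u)"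

definition global_offensive_alliance :: "'a set \<Rightarrow> ('a \<Rightarrow> 'a \<Rightarrow> bool) \<Rightarrow> int \<Rightarrow> 'a set \<Rightarrow> bool" where
  "global_offensive_alliance V E k S \<longleftrightarrow> offensive_alliance V E k S \<and> dominating V E S"

definition cart_edge :: "('a \<Rightarrow> 'a \<Rightarrow> bool) \<Rightarrow> ('b \<Rightarrow> 'b \<Rightarrow> bool) \<Rightarrow> 'a \<times> 'b \<Rightarrow> 'a \<times> 'b \<Rightarrow> bool" where
  "cart_edge E1 E2 p q \<longleftrightarrow> (fst p = fst q \<and> E2 (snd p) (snd q)) \<or> (snd p = snd q \<and> E1 (fst p) (fst q))"

end

theory Submission
  imports Defs
begin

text \<open>In the product, a vertex \<open>(v, w)\<close> with \<open>v \<notin> S\<close> sees exactly the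
  \<open>\<Gamma>\<^sub>1\<close>-neighbours of \<open>v\<close> in its layer; those in \<open>S\<close> lie in \<open>S \<times> V\<^sub>2\<close>, while the
  \<open>\<delta>\<close> neighbours in its \<open>\<Gamma>\<^sub>2\<close>-fibre all lie outside. So the offensive inequality at \<open>(v, w)\<close>
  is that at \<open>v\<close> with \<open>\<delta>\<close> added to the right-hand side, and boundary and domination
  transfer layerwise.\<close>

lemma deg_in_cart_edge_times:
  assumes "simple_graph V1 E1" and "simple_graph V2 E2"
  shows "deg_in (cart_edge E1 E2) (T \<times> U) (v, w) =
           (if w \<in> U then deg_in E1 T v else 0) + (if v \<in> T then deg_in E2 U w else 0)"
proof -
  let ?A = "(\<lambda>x. (x, w)) ` {x \<in> T. w \<in> U \<and> E1 v x}"
  let ?B = "Pair v ` {y \<in> U. v \<in> T \<and> E2 w y}"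
  have "{p \<in> T \<times> U. cart_edge E1 E2 (v, w) p} = ?A \<union> ?B"
    by (auto simp: cart_edge_def)
  moreover have "?A \<inter> ?B = {}"
    using assms(1) by (auto simp: simple_graph_def)
  moreover have "finite ?A" "finite ?B"
  proof -
    have "{x \<in> T. w \<in> U \<and> E1 v x} \<subseteq> V1" "{y \<in> U. v \<in> T \<and> E2 w y} \<subseteq> V2"
      using assms by (auto simp: simple_graph_def)
    moreover have "finite V1" "finite V2"
      using assms by (simp_all add: simple_graph_def)
    ultimately show "finite ?A" "finite ?B"
      by (simp_all add: finite_subset)
  qed
  moreover have "card ?A = (if w \<in> U then deg_in E1 T v else 0)"
    by (simp add: card_image inj_on_def deg_in_def)
  moreover have "card ?B = (if v \<in> T then deg_in E2 U w else 0)"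
    by (simp add: card_image inj_on_def deg_in_def)
  ultimately show ?thesis
    by (simp add: deg_in_def card_Un_disjoint)
qed

lemma boundary_cart_edge_times:
  "boundary (V1 \<times> V2) (cart_edge E1 E2) (S \<times> V2) = boundary V1 E1 S \<times> V2"
  unfolding boundary_def cart_edge_def by fastforce

lemma dominating_cart_edge_times_iff:
  assumes "V2 \<noteq> {}"
  shows "dominating (V1 \<times> V2) (cart_edge E1 E2) (S \<times> V2) \<longleftrightarrow> dominating V1 E1 S"
proof
  assume dom: "dominating (V1 \<times> V2) (cart_edge E1 E2) (S \<times> V2)"
  obtain w where w: "w \<in> V2" using assms by auto
  have "\<exists>u\<in>S. E1 v u" if "v \<in> V1 - S" for v
  proof -
    from dom that w obtain p where "p \<in> S \<times> V2" "cart_edge E1 E2 (v, w) p"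
      unfolding dominating_def by blast
    with that show ?thesis by (auto simp: cart_edge_def)
  qed
  moreover have "S \<subseteq> V1"
    using dom w by (auto simp: dominating_def)
  ultimately show "dominating V1 E1 S"
    by (simp add: dominating_def)
next
  assume "dominating V1 E1 S"
  then show "dominating (V1 \<times> V2) (cart_edge E1 E2) (S \<times> V2)"
    unfolding dominating_def cart_edge_def by fastforce
qed

lemma offensive_alliance_cart_edge_times_iff:
  assumes "simple_graph V1 E1" and "simple_graph V2 E2"
    and "V2 \<noteq> {}" and "regular V2 E2 \<delta>"
  shows "offensive_alliance (V1 \<times> V2) (cart_edge E1 E2) (k - int \<delta>) (S \<times> V2)
           \<longleftrightarrow> offensive_alliance V1 E1 k S"
proof -
  have "int (deg_in (cart_edge E1 E2) (S \<times> V2) (v, w))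
          \<ge> int (deg_in (cart_edge E1 E2) (V1 \<times> V2 - S \<times> V2) (v, w)) + (k - int \<delta>)
        \<longleftrightarrow> int (deg_in E1 S v) \<ge> int (deg_in E1 (V1 - S) v) + k"
    if "v \<in> boundary V1 E1 S" and "w \<in> V2" for v w
  proof -
    have "V1 \<times> V2 - S \<times> V2 = (V1 - S) \<times> V2" by auto
    moreover have "v \<in> V1 - S" using that(1) by (simp add: boundary_def)
    ultimately show ?thesis
      using that(2) assms(4)
      by (simp add: deg_in_cart_edge_times[OF assms(1,2)] regular_def)
  qed
  then show ?thesis
    using assms(3)
    unfolding offensive_alliance_def boundary_cart_edge_times by auto
qed

theorem mainTheorem15:
  fixes V1 :: "'a set" and E1 :: "'a \<Rightarrow> 'a \<Rightarrow> bool"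
    and V2 :: "'b set" and E2 :: "'b \<Rightarrow> 'b \<Rightarrow> bool"
    and \<delta> :: nat and k :: int and S :: "'a set"
  assumes "simple_graph V1 E1" and "simple_graph V2 E2"
    and "V1 \<noteq> {}" and "V2 \<noteq> {}"
    and "regular V2 E2 \<delta>"
    and "S \<subseteq> V1"
  shows "global_offensive_alliance V1 E1 k S \<longleftrightarrow>
         global_offensive_alliance (V1 \<times> V2) (cart_edge E1 E2) (k - int \<delta>) (S \<times> V2)"
  unfolding global_offensive_alliance_def
  using offensive_alliance_cart_edge_times_iff[OF assms(1,2,4,5)]
    dominating_cart_edge_times_iff[OF assms(4)]
  by blast

end
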